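(* Let $f\in V\hat{A}$. Let $s_0\in\mathrm{Sing}(f)$, and let $O=\{f^i(s_0):i\in\mathbb Z\}$ be its orbit. Suppose $s_0$ is the only singularity of $f$ lying in $O$, and write $s_i=f^i(s_0)$. (a) If $O$ is infinite, then $\mathrm{Sing}(f^n)\cap O=\{s_{-n+1},\dots,s_{-1},s_0\}$ for every $n\ge1$. In particular, $f$ has infinite order and $|\mathrm{Sing}(f^n)|\ge n$ for all $n\ge1$. (b) If $O$ is finite of cardinality $m$, then $\mathrm{Sing}(f^n)\cap O=\{s_{-n+1},\dots,s_0\}$ for $1\le n\le m$. In particular, $s_0$ is a singularity of $f^m$ that is fixed by $f^m$.
   Context: Let $\mathfrak C=\{0,1\}^{\mathbb N}$ be the Cantor set, with points labelled by numbers in $[0,1]$ via binary expansion. A dyadic $p\in(0,1)$ corresponds to two points: $p^-$ (binary expansion eventually $1$) and $p^+$ (binary expansion eventually $0$). The Belk–Hyde–Matucci group $V\hat{A}$ is the group of bijections $f$ of $\mathfrak C$ such that: - $f$ (drawn as a map on $[0,1]$) is piecewise linear with slopes powers of $2$ and pieces beginning and ending at points with dyadic coordinates, where breakpoints may accumulate only at finitely many points, called the singularities of $f$; - each singularity has the form $p^\pm$ with $p$ dyadic, and its image has the form $q^\pm$ with the same sign; - on a sufficiently small one-sided neighborhood of a singularity $p^\pm$ with $f(p^\pm)=q^\pm$, $f$ is continuous and satisfies $f\circ L_p=L_q\circ f$, where $L_r(x)=2(x-r)+r$. $\mathrm{Sing}(f)$ denotes the finite set of singularities of $f$. Products are written as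 $fg=g\circ f$. *)

theory Defs
  imports Main
begin

text \<open>Points of the Cantor set are infinite binary sequences; bit i is the (i+1)-st
binary digit of the coordinate in [0,1].\<close>
type_synonym cantor = "nat \<Rightarrow> bool"

definition cat :: "bool list \<Rightarrow> cantor \<Rightarrow> cantor" where
  "cat u w = (\<lambda>i. if i < length u then u ! i else w (i - length u))"

definition has_prefix :: "cantor \<Rightarrow> bool list \<Rightarrow> bool" where
  "has_prefix x u \<longleftrightarrow> (\<forall>i < length u. x i = u ! i)"

text \<open>f is locally linear with slope a power of 2 and dyadic pieces near x:
  on some cylinder neighbourhood [u] of x, f acts as the prefix replacement uw \<mapsto> vw.\<close>
definition loc_linear :: "(cantor \<Rightarrow> cantor) \<Rightarrow> cantor \<Rightarrow> bool" where
  "loc_linear f x \<longleftrightarrow> (\<exists>u v. has_prefix x u \<and> (\<forall>w. f (cat u w) = cat v w))"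

text \<open>Singularities: points at which breakpoints accumulate, i.e. points with no
  neighbourhood on which f is linear.\<close>
definition Sing :: "(cantor \<Rightarrow> cantor) \<Rightarrow> cantor set" where
  "Sing f = {x. \<not> loc_linear f x}"

text \<open>Dyadic points p^\<plusminus>, p \<in> (0,1): eventually constant, but not constant.\<close>
definition ev_const :: "cantor \<Rightarrow> bool" where
  "ev_const s \<longleftrightarrow> (\<exists>n. \<forall>i\<ge>n. s i = s n)"

definition dyadic_pt :: "cantor \<Rightarrow> bool" where
  "dyadic_pt s \<longleftrightarrow> ev_const s \<and> \<not> (\<forall>i. s i = s 0)"

definition tailstart :: "cantor \<Rightarrow> nat" where
  "tailstart s = (LEAST n. \<forall>i\<ge>n. s i = s n)"

text \<open>The sign of a dyadic point: True for p^- (eventually 1), False for p^+.\<close>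
definition tailbit :: "cantor \<Rightarrow> bool" where
  "tailbit s = s (tailstart s)"

text \<open>The map L_p(x) = 2(x-p)+p near s = p^\<plusminus>: writing s = u c c c ..., with u not
  ending in c, it is u c w \<mapsto> u w (deletion of the digit at position |u|).\<close>
definition Lmap :: "cantor \<Rightarrow> cantor \<Rightarrow> cantor" where
  "Lmap s x = (\<lambda>i. if i < tailstart s then x i else x (Suc i))"

definition cont_at :: "(cantor \<Rightarrow> cantor) \<Rightarrow> cantor \<Rightarrow> bool" where
  "cont_at f x \<longleftrightarrow> (\<forall>m. \<exists>n. \<forall>y. (\<forall>i<n. y i = x i) \<longrightarrow> (\<forall>i<m. f y i = f x i))"

definition VA :: "(cantor \<Rightarrow> cantor) \<Rightarrow> bool" where
  "VA f \<longleftrightarrow> bij f \<and> finite (Sing f) \<and>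
     (\<forall>s \<in> Sing f. dyadic_pt s \<and> dyadic_pt (f s) \<and> tailbit (f s) = tailbit s \<and>
        (\<exists>n. \<forall>x. (\<forall>i<n. x i = s i) \<longrightarrow>
              cont_at f x \<and> f (Lmap s x) = Lmap (f s) (f x)))"

definition fpow :: "(cantor \<Rightarrow> cantor) \<Rightarrow> int \<Rightarrow> cantor \<Rightarrow> cantor" where
  "fpow f i = (if 0 \<le> i then f ^^ nat i else (inv f) ^^ nat (- i))"

definition orbit :: "(cantor \<Rightarrow> cantor) \<Rightarrow> cantor \<Rightarrow> cantor set" where
  "orbit f s = {fpow f i s | i. True}"

end

theory Submission
  imports Defs
begin

text \<open>A point x is singular for f^n only if some point x, f x, ..., f^(n-1) x of its
trajectory is singular for f, since locally linear maps compose. Conversely, if exactly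
one point f^k x of the trajectory is singular, then x is singular for f^n: locally linear
injective maps can be cancelled from both sides of f^n = f^(n-k-1) \<circ> f \<circ> f^k.
On the orbit of s0 the only singularity of f is s0, and as long as n does not exceed the
period the trajectory of s_j meets s0 at most once, namely iff -n < j \<le> 0.\<close>

lemma cat_append: "cat u (cat t w) = cat (u @ t) w"
  by (auto simp: cat_def nth_append fun_eq_iff)

lemma cat_length_plus: "cat u w (length u + i) = w i"
  by (simp add: cat_def)

lemma has_prefix_cat_append: "has_prefix (cat u w) (u @ t) \<longleftrightarrow> has_prefix w t"
proof
  assume "has_prefix (cat u w) (u @ t)"
  then show "has_prefix w t"
    unfolding has_prefix_def
    by (metis cat_length_plus length_append nat_add_left_cancel_less nth_append_length_plus)
next
  assume "has_prefix w t"
  then show "has_prefix (cat u w) (u @ t)"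
    unfolding has_prefix_def cat_def by (auto simp: nth_append)
qed

lemma has_prefix_cat: "has_prefix (cat u w) u"
  using has_prefix_cat_append[of u w "[]"] by (simp add: has_prefix_def)

lemma cat_drop_prefix: "has_prefix x u \<Longrightarrow> x = cat u (\<lambda>i. x (i + length u))"
  by (auto simp: has_prefix_def cat_def fun_eq_iff)

lemma has_prefix_comparable:
  assumes "has_prefix x u" "has_prefix x v" "length u \<le> length v"
  shows "\<exists>t. v = u @ t"
proof -
  have "take (length u) v = u"
    using assms by (intro nth_equalityI) (auto simp: has_prefix_def)
  then show ?thesis by (metis append_take_drop_id)
qed

lemma cylinder_map_append:
  "\<forall>w. f (cat u w) = cat v w \<Longrightarrow> \<forall>w. f (cat (u @ t) w) = cat (v @ t) w"
  by (simp flip: cat_append)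

lemma has_prefix_image:
  "has_prefix x u \<Longrightarrow> \<forall>w. f (cat u w) = cat v w \<Longrightarrow> has_prefix (f x) v"
  by (metis cat_drop_prefix has_prefix_cat)

lemma cylinder_map_refine:
  assumes x: "has_prefix x u" and g: "\<forall>w. g (cat u w) = cat v w" and q: "has_prefix (g x) q"
  obtains u' t where "has_prefix x u'" "\<forall>w. g (cat u' w) = cat (q @ t) w"
proof (cases "length q \<le> length v")
  case True
  then obtain t where "v = q @ t"
    using has_prefix_comparable has_prefix_image[OF x g] q by blast
  then show ?thesis using that x g by blast
next
  case False
  define z where "z = (\<lambda>i. x (i + length u))"
  have "x = cat u z" unfolding z_def by (rule cat_drop_prefix[OF x])
  then have gx: "g x = cat v z" using g by simp
  obtain t where qt: "q = v @ t"
    using False has_prefix_comparable has_prefix_image[OF x g] q by (metis nle_le)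
  then have "has_prefix z t" using q gx has_prefix_cat_append by simp
  then have "has_prefix x (u @ t)" using \<open>x = cat u z\<close> has_prefix_cat_append by simp
  moreover have "\<forall>w. g (cat (u @ t) w) = cat (q @ []) w"
    using cylinder_map_append[OF g] qt by simp
  ultimately show ?thesis using that by blast
qed

lemma loc_linear_common_prefix:
  assumes "loc_linear f x" "loc_linear g x"
  obtains u v v' where "has_prefix x u"
    "\<forall>w. f (cat u w) = cat v w" "\<forall>w. g (cat u w) = cat v' w"
proof -
  obtain a b where a: "has_prefix x a" "\<forall>w. f (cat a w) = cat b w"
    using assms(1) loc_linear_def by blast
  obtain c d where c: "has_prefix x c" "\<forall>w. g (cat c w) = cat d w"
    using assms(2) loc_linear_def by blast
  show ?thesis
  proof (cases "length a \<le> length c")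
    case True
    then obtain t where "c = a @ t" using has_prefix_comparable a c by blast
    then show ?thesis using that c cylinder_map_append[OF a(2)] by blast
  next
    case False
    then obtain t where "a = c @ t" using has_prefix_comparable a c by (metis nle_le)
    then show ?thesis using that a cylinder_map_append[OF c(2)] by blast
  qed
qed

lemma loc_linear_id: "loc_linear id x"
  unfolding loc_linear_def has_prefix_def
  by (intro exI[of _ "[]"]) (simp add: cat_def)

lemma Sing_id: "Sing id = {}"
  by (simp add: Sing_def loc_linear_id)

lemma loc_linear_comp:
  assumes "loc_linear A x" "loc_linear B (A x)"
  shows "loc_linear (B \<circ> A) x"
proof -
  obtain a b where a: "has_prefix x a" "\<forall>w. A (cat a w) = cat b w"
    using assms(1) loc_linear_def by blast
  obtain p q where p: "has_prefix (A x) p" "\<forall>w. B (cat p w) = cat q w"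
    using assms(2) loc_linear_def by blast
  obtain a' t where a': "has_prefix x a'" "\<forall>w. A (cat a' w) = cat (p @ t) w"
    using cylinder_map_refine[OF a p(1)] .
  then have "\<forall>w. (B \<circ> A) (cat a' w) = cat (q @ t) w"
    using cylinder_map_append[OF p(2)] by simp
  then show ?thesis unfolding loc_linear_def using a'(1) by blast
qed

lemma loc_linear_cancel_right:
  assumes "loc_linear (B \<circ> A) x" "loc_linear A x"
  shows "loc_linear B (A x)"
proof -
  obtain u v v' where u: "has_prefix x u"
      "\<forall>w. B (A (cat u w)) = cat v w" "\<forall>w. A (cat u w) = cat v' w"
    using loc_linear_common_prefix[OF assms] by (metis comp_apply)
  have "has_prefix (A x) v'" using has_prefix_image u(1,3) .
  moreover have "\<forall>w. B (cat v' w) = cat v w" using u(2,3) by simp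
  ultimately show ?thesis unfolding loc_linear_def by blast
qed

lemma loc_linear_cancel_left:
  assumes "inj C" "loc_linear (C \<circ> D) x" "loc_linear C (D x)"
  shows "loc_linear D x"
proof -
  obtain u v where u: "has_prefix x u" "\<forall>w. (C \<circ> D) (cat u w) = cat v w"
    using assms(2) loc_linear_def by blast
  obtain p q where p: "has_prefix (D x) p" "\<forall>w. C (cat p w) = cat q w"
    using assms(3) loc_linear_def by blast
  have "has_prefix ((C \<circ> D) x) q" using has_prefix_image[OF p] by simp
  then obtain u' t where u': "has_prefix x u'" "\<forall>w. C (D (cat u' w)) = cat (q @ t) w"
    using cylinder_map_refine[OF u] by (metis comp_apply)
  have "\<forall>w. D (cat u' w) = cat (p @ t) w"
    using u'(2) cylinder_map_append[OF p(2)] injD[OF assms(1)] by metis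
  then show ?thesis unfolding loc_linear_def using u'(1) by blast
qed

lemma loc_linear_cancel_outer:
  assumes "inj C" "loc_linear (C \<circ> B \<circ> A) x" "loc_linear A x" "loc_linear C (B (A x))"
  shows "loc_linear B (A x)"
proof -
  have "loc_linear (B \<circ> A) x"
    using loc_linear_cancel_left[of C "B \<circ> A"] assms by (simp add: comp_assoc)
  then show ?thesis using loc_linear_cancel_right assms(3) by blast
qed

lemma loc_linear_funpow:
  assumes "\<forall>i<n. (f ^^ i) x \<notin> Sing f"
  shows "loc_linear (f ^^ n) x"
  using assms
proof (induction n)
  case 0
  then show ?case using loc_linear_id by (simp add: id_def)
next
  case (Suc n)
  then have "loc_linear (f \<circ> f ^^ n) x"
    by (intro loc_linear_comp) (auto simp: Sing_def)
  then show ?case by (simp only: funpow.simps(2))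
qed

lemma Sing_funpow_imp_Sing:
  "x \<in> Sing (f ^^ n) \<Longrightarrow> \<exists>i<n. (f ^^ i) x \<in> Sing f"
  using loc_linear_funpow unfolding Sing_def by blast

lemma Sing_funpow_if_unique_Sing:
  assumes "inj f" "k < n" "(f ^^ k) x \<in> Sing f"
    and others: "\<forall>i<n. i \<noteq> k \<longrightarrow> (f ^^ i) x \<notin> Sing f"
  shows "x \<in> Sing (f ^^ n)"
proof (rule ccontr)
  assume "x \<notin> Sing (f ^^ n)"
  moreover have "f ^^ n = f ^^ (n - Suc k) \<circ> f \<circ> f ^^ k"
  proof -
    have "n = (n - Suc k) + Suc k" using \<open>k < n\<close> by simp
    then show ?thesis by (metis funpow_add funpow.simps(2) comp_assoc)
  qed
  ultimately have lin: "loc_linear (f ^^ (n - Suc k) \<circ> f \<circ> f ^^ k) x"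
    by (simp add: Sing_def)
  have "loc_linear (f ^^ k) x"
    using others \<open>k < n\<close> by (intro loc_linear_funpow) auto
  moreover have "loc_linear (f ^^ (n - Suc k)) (f ((f ^^ k) x))"
  proof (rule loc_linear_funpow, intro allI impI)
    fix i assume "i < n - Suc k"
    then have "(f ^^ (i + Suc k)) x \<notin> Sing f" using others by (simp del: funpow.simps)
    then show "(f ^^ i) (f ((f ^^ k) x)) \<notin> Sing f"
      by (simp add: funpow_add funpow_swap1)
  qed
  ultimately have "loc_linear f ((f ^^ k) x)"
    using loc_linear_cancel_outer[OF inj_fn[OF \<open>inj f\<close>] lin] by blast
  then show False using \<open>(f ^^ k) x \<in> Sing f\<close> by (simp add: Sing_def)
qed

lemma fpow_nat: "fpow f (int n) = f ^^ n"
  by (simp add: fpow_def)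

lemma fpow_0 [simp]: "fpow f 0 x = x"
  by (simp add: fpow_def)

lemma fpow_plus_1:
  assumes "bij f"
  shows "fpow f (i + 1) x = f (fpow f i x)"
proof (cases "i \<ge> 0")
  case True
  then have "nat (i + 1) = Suc (nat i)" by simp
  then show ?thesis using True by (simp add: fpow_def)
next
  case False
  then have "nat (- i) = Suc (nat (- (i + 1)))" by simp
  then have "fpow f i x = inv f (fpow f (i + 1) x)" using False by (simp add: fpow_def)
  then show ?thesis using assms by (simp add: bij_is_surj surj_f_inv_f)
qed

lemma fpow_minus_1:
  assumes "bij f"
  shows "fpow f (i - 1) x = inv f (fpow f i x)"
  using fpow_plus_1[OF assms, of "i - 1" x] inv_f_f[OF bij_is_inj[OF assms]] by simp

lemma fpow_add:
  assumes "bij f"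
  shows "fpow f (i + j) x = fpow f i (fpow f j x)"
proof (induction i rule: int_induct[where k = 0])
  case (step1 i)
  then show ?case using fpow_plus_1[OF assms] by (metis add.commute add.left_commute)
next
  case (step2 i)
  then show ?case using fpow_minus_1[OF assms] by (metis add.commute add_diff_eq)
qed simp

lemma funpow_fpow: "bij f \<Longrightarrow> (f ^^ n) (fpow f j x) = fpow f (int n + j) x"
  by (simp add: fpow_add fpow_nat)

lemma fpow_eq_imp_fpow_diff:
  assumes "bij f" "fpow f a x = fpow f b x"
  shows "fpow f (a - b) x = x"
  using fpow_add[OF assms(1), of "- b"] assms(2)
  by (metis add.commute diff_conv_add_uminus right_minus fpow_0)

lemma fpow_mult_period:
  assumes "bij f" "fpow f p x = x"
  shows "fpow f (p * q) x = x"
proof (induction q rule: int_induct[where k = 0])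
  case (step1 q)
  then show ?case using fpow_add[OF assms(1), of p "p * q"] assms(2) by (simp add: algebra_simps)
next
  case (step2 q)
  have "fpow f (p * (q - 1)) x = fpow f (p * (q - 1)) (fpow f p x)" using assms(2) by simp
  also have "\<dots> = x" using fpow_add[OF assms(1), of "p * (q - 1)" p] step2 by (simp add: algebra_simps)
  finally show ?case .
qed simp

lemma orbit_subset_period:
  assumes "bij f" "p > 0" "fpow f p x = x"
  shows "orbit f x \<subseteq> (\<lambda>i. fpow f i x) ` {0..<p}"
proof
  fix y assume "y \<in> orbit f x"
  then obtain c where "y = fpow f c x" by (auto simp: orbit_def)
  also have "\<dots> = fpow f (c mod p) (fpow f (p * (c div p)) x)"
    using fpow_add[OF assms(1)] by (metis mult.commute mod_div_mult_eq)
  also have "\<dots> = fpow f (c mod p) x" using fpow_mult_period[OF assms(1,3)] by simp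
  finally show "y \<in> (\<lambda>i. fpow f i x) ` {0..<p}" using assms(2) by simp
qed

lemma orbit_card_le_period:
  assumes "bij f" "j \<noteq> 0" "fpow f j x = x"
  shows "finite (orbit f x) \<and> card (orbit f x) \<le> nat \<bar>j\<bar>"
proof -
  have "fpow f \<bar>j\<bar> x = x"
    using fpow_eq_imp_fpow_diff[OF assms(1), of 0 x j] assms(3) by (simp add: abs_if)
  then have sub: "orbit f x \<subseteq> (\<lambda>i. fpow f i x) ` {0..<\<bar>j\<bar>}"
    using orbit_subset_period[OF assms(1)] assms(2) by simp
  moreover have "card ((\<lambda>i. fpow f i x) ` {0..<\<bar>j\<bar>}) \<le> nat \<bar>j\<bar>"
    using card_image_le[of "{0..<\<bar>j\<bar>}" "\<lambda>i. fpow f i x"] by simp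
  ultimately show ?thesis
    by (meson card_mono finite_atLeastLessThan_int finite_imageI finite_subset le_trans)
qed

lemma inj_fpow_infinite_orbit:
  assumes "bij f" "infinite (orbit f x)"
  shows "inj (\<lambda>j. fpow f j x)"
proof (rule injI, rule ccontr)
  fix a b assume "fpow f a x = fpow f b x" "a \<noteq> b"
  then have "fpow f (a - b) x = x" "a - b \<noteq> 0" using fpow_eq_imp_fpow_diff[OF assms(1)] by auto
  then show False using orbit_card_le_period[OF assms(1)] assms(2) by blast
qed

lemma fpow_card_orbit:
  assumes "bij f" "finite (orbit f x)"
  shows "fpow f (int (card (orbit f x))) x = x"
proof -
  define m where "m = card (orbit f x)"
  have "\<not> inj_on (\<lambda>i. fpow f i x) {0..int m}"
  proof
    assume "inj_on (\<lambda>i. fpow f i x) {0..int m}"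
    moreover have "(\<lambda>i. fpow f i x) ` {0..int m} \<subseteq> orbit f x" by (auto simp: orbit_def)
    ultimately have "card {0..int m} \<le> m"
      using card_inj_on_le assms(2) unfolding m_def by blast
    then show False by simp
  qed
  obtain a b where ab: "0 \<le> a" "a < b" "b \<le> int m" "fpow f a x = fpow f b x"
  proof -
    obtain a b where "a \<in> {0..int m}" "b \<in> {0..int m}" "a \<noteq> b" "fpow f a x = fpow f b x"
      using \<open>\<not> inj_on _ _\<close> unfolding inj_on_def by blast
    then show thesis using that[of a b] that[of b a] by (cases "a < b") auto
  qed
  have "fpow f (b - a) x = x" using fpow_eq_imp_fpow_diff[OF assms(1) ab(4)[symmetric]] .
  then have "m \<le> nat (b - a)"
    using orbit_card_le_period[OF assms(1), of "b - a"] ab(2) unfolding m_def by simp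
  then have "b - a = int m" using ab by linarith
  then show ?thesis using \<open>fpow f (b - a) x = x\<close> unfolding m_def by simp
qed

lemma fpow_ne_self_below_card:
  assumes "bij f" "j \<noteq> 0" "finite (orbit f x) \<longrightarrow> \<bar>j\<bar> < int (card (orbit f x))"
  shows "fpow f j x \<noteq> x"
  using orbit_card_le_period[OF assms(1,2)] assms(3) by fastforce

lemma self_in_orbit: "x \<in> orbit f x"
  unfolding orbit_def by (metis (mono_tags) fpow_0 mem_Collect_eq)

lemma card_backward_orbit:
  assumes "bij f" "infinite (orbit f x)"
  shows "card {fpow f (- int k) x | k. k < n} = n"
proof -
  have "{fpow f (- int k) x | k. k < n} = (\<lambda>k. fpow f (- int k) x) ` {..<n}" by auto
  moreover have "inj (\<lambda>k. fpow f (- int k) x)"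
  proof (rule injI)
    fix k l assume "fpow f (- int k) x = fpow f (- int l) x"
    then have "- int k = - int l" using injD[OF inj_fpow_infinite_orbit[OF assms]] by blast
    then show "k = l" by simp
  qed
  ultimately show ?thesis by (simp add: card_image inj_on_subset)
qed

locale isolated_singular_orbit =
  fixes f :: "cantor \<Rightarrow> cantor" and s0 :: cantor
  assumes bij: "bij f"
    and s0_Sing: "s0 \<in> Sing f"
    and Sing_orbit: "Sing f \<inter> orbit f s0 = {s0}"
begin

lemma orbit_Sing_iff: "fpow f j s0 \<in> Sing f \<longleftrightarrow> fpow f j s0 = s0"
  using Sing_orbit s0_Sing unfolding orbit_def by blast

lemma Sing_funpow_orbit_subset:
  "Sing (f ^^ n) \<inter> orbit f s0 \<subseteq> {fpow f (- int k) s0 | k. k < n}"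
proof
  fix x assume x: "x \<in> Sing (f ^^ n) \<inter> orbit f s0"
  then obtain j where j: "x = fpow f j s0" by (auto simp: orbit_def)
  obtain k where "k < n" "(f ^^ k) x \<in> Sing f"
    using Sing_funpow_imp_Sing x by blast
  then have "fpow f (int k + j) s0 = s0"
    using orbit_Sing_iff funpow_fpow[OF bij] j by simp
  then have "x = fpow f (- int k) s0"
    using fpow_add[OF bij, of "- int k" "int k + j"] j by simp
  then show "x \<in> {fpow f (- int k) s0 | k. k < n}" using \<open>k < n\<close> by blast
qed

lemma backward_orbit_Sing_funpow:
  assumes short: "finite (orbit f s0) \<longrightarrow> n \<le> card (orbit f s0)" and "k < n"
  shows "fpow f (- int k) s0 \<in> Sing (f ^^ n)"
proof (rule Sing_funpow_if_unique_Sing)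
  have trajectory: "(f ^^ i) (fpow f (- int k) s0) = fpow f (int i - int k) s0" for i
    using funpow_fpow[OF bij] by simp
  show "(f ^^ k) (fpow f (- int k) s0) \<in> Sing f"
    using trajectory s0_Sing by simp
  have "fpow f (int i - int k) s0 \<noteq> s0" if "i < n" "i \<noteq> k" for i
  proof (rule fpow_ne_self_below_card[OF bij])
    show "int i - int k \<noteq> 0" using that by simp
    show "finite (orbit f s0) \<longrightarrow> \<bar>int i - int k\<bar> < int (card (orbit f s0))"
      using short that \<open>k < n\<close> by auto
  qed
  then show "\<forall>i<n. i \<noteq> k \<longrightarrow> (f ^^ i) (fpow f (- int k) s0) \<notin> Sing f"
    using trajectory orbit_Sing_iff by auto
qed (use bij bij_is_inj \<open>k < n\<close> in auto)

lemma Sing_funpow_orbit: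
  assumes "finite (orbit f s0) \<longrightarrow> n \<le> card (orbit f s0)"
  shows "Sing (f ^^ n) \<inter> orbit f s0 = {fpow f (- int k) s0 | k. k < n}"
  using Sing_funpow_orbit_subset backward_orbit_Sing_funpow[OF assms]
  by (auto simp: orbit_def)

lemma s0_Sing_funpow:
  assumes "finite (orbit f s0) \<longrightarrow> n \<le> card (orbit f s0)" "1 \<le> n"
  shows "s0 \<in> Sing (f ^^ n)"
  using backward_orbit_Sing_funpow[OF assms(1), of 0] assms(2) by simp

end

theorem mainTheorem7:
  fixes f :: "cantor \<Rightarrow> cantor" and s0 :: cantor
  assumes "VA f"
    and "s0 \<in> Sing f"
    and "Sing f \<inter> orbit f s0 = {s0}"
  shows "(infinite (orbit f s0) \<longrightarrow>
            (\<forall>n::nat. 1 \<le> n \<longrightarrow>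
               Sing (f ^^ n) \<inter> orbit f s0 = {fpow f (- int k) s0 | k. k < n}) \<and>
            (\<forall>n::nat. 1 \<le> n \<longrightarrow> f ^^ n \<noteq> id) \<and>
            (\<forall>n::nat. 1 \<le> n \<longrightarrow> (\<exists>S. S \<subseteq> Sing (f ^^ n) \<and> finite S \<and> card S = n)))
       \<and> (\<forall>m. finite (orbit f s0) \<and> card (orbit f s0) = m \<longrightarrow>
            (\<forall>n::nat. 1 \<le> n \<and> n \<le> m \<longrightarrow>
               Sing (f ^^ n) \<inter> orbit f s0 = {fpow f (- int k) s0 | k. k < n}) \<and>
            s0 \<in> Sing (f ^^ m) \<and> (f ^^ m) s0 = s0)"
proof -
  have "bij f" using assms(1) by (simp add: VA_def)
  interpret isolated_singular_orbit f s0
    using \<open>bij f\<close> assms(2,3) by unfold_locales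
  show ?thesis
  proof (intro conjI allI impI)
    fix n :: nat assume inf: "infinite (orbit f s0)" and "1 \<le> n"
    then have short: "finite (orbit f s0) \<longrightarrow> n \<le> card (orbit f s0)" by simp
    show "Sing (f ^^ n) \<inter> orbit f s0 = {fpow f (- int k) s0 | k. k < n}"
      using Sing_funpow_orbit[OF short] .
    show "f ^^ n \<noteq> id"
      using s0_Sing_funpow[OF short \<open>1 \<le> n\<close>] Sing_id by auto
    let ?S = "{fpow f (- int k) s0 | k. k < n}"
    have "card ?S = n" using card_backward_orbit[OF \<open>bij f\<close> inf] .
    moreover from this have "finite ?S" using \<open>1 \<le> n\<close> by (intro card_ge_0_finite) simp
    moreover have "?S \<subseteq> Sing (f ^^ n)"
      unfolding Sing_funpow_orbit[OF short, symmetric] by (rule Int_lower1)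
    ultimately show "\<exists>S. S \<subseteq> Sing (f ^^ n) \<and> finite S \<and> card S = n"
      by (intro exI[of _ ?S] conjI)
  next
    fix m n :: nat assume m: "finite (orbit f s0) \<and> card (orbit f s0) = m"
    then show "1 \<le> n \<and> n \<le> m \<Longrightarrow>
        Sing (f ^^ n) \<inter> orbit f s0 = {fpow f (- int k) s0 | k. k < n}"
      using Sing_funpow_orbit[of n] by simp
    have "0 < card (orbit f s0)" using m self_in_orbit[of s0 f] by (auto simp: card_gt_0_iff)
    then have "1 \<le> m" using m by simp
    then show "s0 \<in> Sing (f ^^ m)" using s0_Sing_funpow[of m] m by simp
    show "(f ^^ m) s0 = s0"
      using fpow_card_orbit[OF \<open>bij f\<close>, of s0] m by (simp add: fpow_nat)
  qed
qed

end
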